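(* Let $(\omega,\rho)$ be a half-flat ${\rm SU}(3)$-structure on the Lie algebra $\mathfrak g=\mathfrak h_3\oplus\mathfrak h_3$ (i.e. a compatible normalised pair of stable forms on $\mathfrak g$ with positive definite induced metric, $d\rho=0$ and $d(\omega^2)=0$). Then $\omega(\mathfrak z,\mathfrak z)\neq0$, where $\mathfrak z$ is the centre of $\mathfrak g$. In particular there is a standard basis in which $\omega$ is a nonzero multiple of $e^1\wedge f^1+e^2\wedge f^2+e^3\wedge f^3$.
   Context: A standard basis of $\mathfrak h_3\oplus\mathfrak h_3$ ($\mathfrak h_3$ the three-dimensional Heisenberg algebra) is a basis $e_1,e_2,e_3,f_1,f_2,f_3$ with dual basis $e^1,\dots,f^3$ such that $de^3=e^1\wedge e^2$, $df^3=f^1\wedge f^2$, all other basis one-forms closed; the centre is $\mathrm{span}\{e_3,f_3\}$. For a stable three-form $\rho$ on an oriented six-dimensional space: $K_\rho(v)=\kappa((v\lrcorner\rho)\wedge\rho)$, $\lambda(\rho)=\frac16\mathrm{tr}K_\rho^2$, $J_\rho=K_\rho/\sqrt{|\lambda(\rho)|}$. A compatible normalised pair $(\omega,\rho)$: $\omega$ nondegenerate, $\rho$ stable, $\omega\wedge\rho=0$, $J_\rho^*\rho\wedge\rho=\frac23\omega^3$ (orientation by $\omega^3$); its induced metric is $\varepsilon\omega(\cdot,J_\rho\cdot)$, $\varepsilon=\mathrm{sign}\lambda(\rho)$; it is an ${\rm SU}(3)$-structure iff this metric is positive definite. *)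

theory Defs
  imports Complex_Main "HOL-Combinatorics.Permutations"
begin

text \<open>Vectors are functions nat => real supported on indices 0..5; the standard
  basis e1,e2,e3,f1,f2,f3 corresponds to the indices 0,1,2,3,4,5.
  A k-form is represented by its components alpha [i1,...,ik] =
  alpha(b_i1,...,b_ik) with respect to the standard basis (functions on index lists).\<close>

type_synonym vec = "nat \<Rightarrow> real"
type_synonym form = "nat list \<Rightarrow> real"

definition V :: "vec set" where
  "V = {v. \<forall>i\<ge>6. v i = 0}"

definition unitv :: "nat \<Rightarrow> vec" where
  "unitv i = (\<lambda>m. if m = i then 1 else 0)"

definition idx :: "nat \<Rightarrow> nat list set" where
  "idx k = {ys. length ys = k \<and> set ys \<subseteq> {..<6}}"

definition is_form :: "nat \<Rightarrow> form \<Rightarrow> bool" where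
  "is_form k \<alpha> \<longleftrightarrow>
     (\<forall>xs. xs \<notin> idx k \<longrightarrow> \<alpha> xs = 0) \<and>
     (\<forall>xs \<sigma>. \<sigma> permutes {..<length xs} \<longrightarrow> \<alpha> (permute_list \<sigma> xs) = of_int (sign \<sigma>) * \<alpha> xs) \<and>
     (\<forall>xs. \<not> distinct xs \<longrightarrow> \<alpha> xs = 0)"

text \<open>Wedge product (determinant convention: (e^1 /\ e^2)(e_1,e_2) = 1).\<close>
definition wedge :: "nat \<Rightarrow> nat \<Rightarrow> form \<Rightarrow> form \<Rightarrow> form" where
  "wedge k l \<alpha> \<beta> xs =
     (if xs \<in> idx (k + l) then
        (\<Sum>\<sigma> | \<sigma> permutes {..<k + l}.
            of_int (sign \<sigma>) * \<alpha> (take k (permute_list \<sigma> xs)) * \<beta> (drop k (permute_list \<sigma> xs)))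
        / (fact k * fact l)
      else 0)"

definition intp :: "vec \<Rightarrow> form \<Rightarrow> form" where
  "intp v \<alpha> xs = (\<Sum>i<6. v i * \<alpha> (i # xs))"

definition ev2 :: "form \<Rightarrow> vec \<Rightarrow> vec \<Rightarrow> real" where
  "ev2 \<omega> x y = (\<Sum>i<6. \<Sum>j<6. \<omega> [i, j] * x i * y j)"

definition pull :: "nat \<Rightarrow> (vec \<Rightarrow> vec) \<Rightarrow> form \<Rightarrow> form" where
  "pull k f \<alpha> xs =
     (if xs \<in> idx k then (\<Sum>ys\<in>idx k. \<alpha> ys * (\<Prod>j<k. f (unitv (xs ! j)) (ys ! j))) else 0)"

text \<open>Linear map given by a matrix a (A e_x = sum_y a y x e_y).\<close>
definition matmap :: "(nat \<Rightarrow> nat \<Rightarrow> real) \<Rightarrow> vec \<Rightarrow> vec" where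
  "matmap a v = (\<lambda>y. if y < 6 then (\<Sum>x<6. a y x * v x) else 0)"

definition invertible6 :: "(nat \<Rightarrow> nat \<Rightarrow> real) \<Rightarrow> bool" where
  "invertible6 a \<longleftrightarrow> (\<exists>b. \<forall>i<6. \<forall>j<6. (\<Sum>k<6. a i k * b k j) = (if i = j then 1 else 0))"

text \<open>Stable three-form: its GL(6,R)-orbit is open in the space of three-forms.\<close>
definition stable3 :: "form \<Rightarrow> bool" where
  "stable3 \<rho> \<longleftrightarrow> is_form 3 \<rho> \<and>
     (\<exists>\<epsilon>>0. \<forall>\<sigma>. is_form 3 \<sigma> \<and> (\<forall>xs. \<bar>\<sigma> xs - \<rho> xs\<bar> < \<epsilon>) \<longrightarrow>
        (\<exists>a. invertible6 a \<and> \<sigma> = pull 3 (matmap a) \<rho>))"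

definition nondeg2 :: "form \<Rightarrow> bool" where
  "nondeg2 \<omega> \<longleftrightarrow> is_form 2 \<omega> \<and> (\<forall>x\<in>V. (\<forall>y\<in>V. ev2 \<omega> x y = 0) \<longrightarrow> x = (\<lambda>_. 0))"

text \<open>Lie bracket of h3 + h3 in the standard basis, chosen so that for the
  Chevalley-Eilenberg differential below de^3 = e^1 /\ e^2, df^3 = f^1 /\ f^2.\<close>
definition lb :: "vec \<Rightarrow> vec \<Rightarrow> vec" where
  "lb x y = (\<lambda>m. if m = 2 then - (x 0 * y 1 - x 1 * y 0)
                 else if m = 5 then - (x 3 * y 4 - x 4 * y 3) else 0)"

definition centre :: "vec set" where
  "centre = {x \<in> V. \<forall>y\<in>V. lb x y = (\<lambda>_. 0)}"

definition dform :: "nat \<Rightarrow> form \<Rightarrow> form" where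
  "dform k \<alpha> xs =
     (if xs \<in> idx (k + 1) then
        (\<Sum>i<k + 1. \<Sum>j\<in>{i<..<k + 1}. (-1) ^ (i + j) *
           intp (lb (unitv (xs ! i)) (unitv (xs ! j))) \<alpha>
             (map (nth xs) (filter (\<lambda>m. m \<noteq> i \<and> m \<noteq> j) [0..<k + 1])))
      else 0)"

text \<open>kappa: Lambda^5 -> V (x) Lambda^6, trivialised by the volume form nu:
  kappa(eta) = v where v _| nu = eta.\<close>
definition kappa :: "form \<Rightarrow> form \<Rightarrow> vec" where
  "kappa \<nu> \<eta> = (THE v. v \<in> V \<and> intp v \<nu> = \<eta>)"

text \<open>Volume form omega^3 (orientation given by omega^3).\<close>
definition cube :: "form \<Rightarrow> form" where
  "cube \<omega> = wedge 2 4 \<omega> (wedge 2 2 \<omega> \<omega>)"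

definition Kmap :: "form \<Rightarrow> form \<Rightarrow> vec \<Rightarrow> vec" where
  "Kmap \<omega> \<rho> v = kappa (cube \<omega>) (wedge 2 3 (intp v \<rho>) \<rho>)"

definition lam :: "form \<Rightarrow> form \<Rightarrow> real" where
  "lam \<omega> \<rho> = (\<Sum>i<6. Kmap \<omega> \<rho> (Kmap \<omega> \<rho> (unitv i)) i) / 6"

definition Jmap :: "form \<Rightarrow> form \<Rightarrow> vec \<Rightarrow> vec" where
  "Jmap \<omega> \<rho> v = (\<lambda>m. Kmap \<omega> \<rho> v m / sqrt \<bar>lam \<omega> \<rho>\<bar>)"

definition metric :: "form \<Rightarrow> form \<Rightarrow> vec \<Rightarrow> vec \<Rightarrow> real" where
  "metric \<omega> \<rho> x y = sgn (lam \<omega> \<rho>) * ev2 \<omega> x (Jmap \<omega> \<rho> y)"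

definition compatible_normalised :: "form \<Rightarrow> form \<Rightarrow> bool" where
  "compatible_normalised \<omega> \<rho> \<longleftrightarrow>
     nondeg2 \<omega> \<and> stable3 \<rho> \<and>
     wedge 2 3 \<omega> \<rho> = (\<lambda>_. 0) \<and>
     wedge 3 3 (pull 3 (Jmap \<omega> \<rho>) \<rho>) \<rho> = (\<lambda>xs. 2/3 * cube \<omega> xs)"

definition SU3_structure :: "form \<Rightarrow> form \<Rightarrow> bool" where
  "SU3_structure \<omega> \<rho> \<longleftrightarrow> compatible_normalised \<omega> \<rho> \<and>
     (\<forall>x\<in>V. x \<noteq> (\<lambda>_. 0) \<longrightarrow> metric \<omega> \<rho> x x > 0)"

definition half_flat :: "form \<Rightarrow> form \<Rightarrow> bool" where
  "half_flat \<omega> \<rho> \<longleftrightarrow> SU3_structure \<omega> \<rho> \<and>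
     dform 3 \<rho> = (\<lambda>_. 0) \<and> dform 4 (wedge 2 2 \<omega> \<omega>) = (\<lambda>_. 0)"

definition comb :: "(nat \<Rightarrow> vec) \<Rightarrow> vec \<Rightarrow> vec" where
  "comb b c = (\<lambda>m. \<Sum>k<6. c k * b k m)"

text \<open>A standard basis: a basis b 0..b 5 of V with the same bracket relations
  as the standard basis (equivalently, its dual basis satisfies the structure equations).\<close>
definition standard_basis :: "(nat \<Rightarrow> vec) \<Rightarrow> bool" where
  "standard_basis b \<longleftrightarrow>
     (\<forall>i<6. b i \<in> V) \<and>
     (\<forall>c. comb b c = (\<lambda>_. 0) \<longrightarrow> (\<forall>k<6. c k = 0)) \<and>
     (\<forall>i<6. \<forall>j<6. lb (b i) (b j) = comb b (lb (unitv i) (unitv j)))"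

definition stdform :: "nat \<Rightarrow> nat \<Rightarrow> real" where
  "stdform i j = (if i < 3 \<and> j = i + 3 then 1 else if j < 3 \<and> i = j + 3 then -1 else 0)"

end

theory Submission
  imports Defs
begin

(* Write e1,e2,e3,f1,f2,f3 for the standard basis (indices 0..5); the centre is span{e3,f3}
   (indices 2 and 5) and the only nonzero brackets are [e1,e2] = -e3 and [f1,f2] = -f3.

   Part 1, omega(e3,f3) <> 0.  Closedness of rho forces every component of rho containing both
   e3 and f3 to vanish.  Hence (e3 _| rho) /\ rho vanishes on all five-tuples containing e3 and
   f3, i.e. K_rho(e3) lies in span{e3,f3}.  If omega(e3,f3) = 0 this gives omega(e3, J e3) = 0,
   so e3 would be a null vector of the induced metric.  (Positivity of the metric also forces
   omega^3 to be a volume form, which is what makes K_rho computable from components.)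

   Projecting e1,e2,f1,f2 omega-orthogonally away from the centre
   gives vectors perp 0, perp 1, perp 3, perp 4.  Closedness of omega^2 makes the planes
   spanned by perp 0, perp 1 and by perp 3, perp 4 isotropic, and nondegeneracy of omega makes
   their 2x2 pairing matrix invertible.  Dualising perp 3, perp 4 against perp 0, perp 1 and
   rescaling f3 yields a basis with the bracket relations of a standard basis in which omega is
   (det / omega(e3,f3)) (e^1/\f^1 + e^2/\f^2 + e^3/\f^3); linear independence follows from
   this Gram matrix. *)

lemma less_6_cases: "(m::nat) < 6 \<Longrightarrow> m = 0 \<or> m = 1 \<or> m = 2 \<or> m = 3 \<or> m = 4 \<or> m = 5"
  by auto

lemma upt_4: "[0..<4::nat] = [0,1,2,3]"
  by (simp add: upt_rec)

lemma upt_5: "[0..<5::nat] = [0,1,2,3,4]"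
  by (simp add: upt_rec)

lemma upt_6: "[0..<6::nat] = [0,1,2,3,4,5]"
  by (simp add: upt_rec)

lemma sum_lessThan_6: "(\<Sum>i<6. f i) = f 0 + f 1 + f 2 + f 3 + f 4 + (f 5 :: real)"
  for f :: "nat \<Rightarrow> real"
  by (simp add: lessThan_nat_numeral)

lemma pair_sum_4: "(\<Sum>i<4. \<Sum>j\<in>{i<..<4}. F i j) = F 0 1 + F 0 2 + F 0 3 + F 1 2 + F 1 3 + (F 2 3 :: real)"
  for F :: "nat \<Rightarrow> nat \<Rightarrow> real"
proof -
  have e: "{..<4::nat} = {0,1,2,3}" "{0<..<4::nat} = {1,2,3}" "{Suc 0<..<4::nat} = {2,3}"
    "{2<..<4::nat} = {3}" "{3<..<4::nat} = {}" by auto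
  show ?thesis by (simp add: e add.assoc)
qed

lemma pair_sum_5: "(\<Sum>i<5. \<Sum>j\<in>{i<..<5}. F i j)
    = F 0 1 + F 0 2 + F 0 3 + F 0 4 + F 1 2 + F 1 3 + F 1 4 + F 2 3 + F 2 4 + (F 3 4 :: real)"
  for F :: "nat \<Rightarrow> nat \<Rightarrow> real"
proof -
  have e: "{..<5::nat} = {0,1,2,3,4}" "{0<..<5::nat} = {1,2,3,4}" "{Suc 0<..<5::nat} = {2,3,4}"
    "{2<..<5::nat} = {3,4}" "{3<..<5::nat} = {4}" "{4<..<5::nat} = {}" by auto
  show ?thesis by (simp add: e add.assoc)
qed

section \<open>Alternating forms in components\<close>

lemma signed_sum_permute_list:
  fixes f :: "nat list \<Rightarrow> real"
  assumes tau: "\<tau> permutes {..<length xs}"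
  shows "(\<Sum>\<sigma> | \<sigma> permutes {..<length xs}. of_int (sign \<sigma>) * f (permute_list \<sigma> (permute_list \<tau> xs)))
       = of_int (sign \<tau>) * (\<Sum>\<sigma> | \<sigma> permutes {..<length xs}. of_int (sign \<sigma>) * f (permute_list \<sigma> xs))"
proof -
  let ?P = "{\<sigma>. \<sigma> permutes {..<length xs}}"
  have pt: "permutation \<tau>" using tau by (auto simp: permutation_permutes)
  have "(\<Sum>\<sigma>\<in>?P. of_int (sign \<sigma>) * f (permute_list \<sigma> xs))
      = (\<Sum>\<sigma>\<in>?P. of_int (sign (\<tau> \<circ> \<sigma>)) * f (permute_list (\<tau> \<circ> \<sigma>) xs))"
    by (rule setum_permutations_compose_left[OF tau])
  also have "\<dots> = (\<Sum>\<sigma>\<in>?P. of_int (sign \<tau>) * (of_int (sign \<sigma>) * f (permute_list \<sigma> (permute_list \<tau> xs))))"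
  proof (rule sum.cong)
    fix \<sigma> assume "\<sigma> \<in> ?P"
    then have ps: "permutation \<sigma>" by (auto simp: permutation_permutes)
    show "of_int (sign (\<tau> \<circ> \<sigma>)) * f (permute_list (\<tau> \<circ> \<sigma>) xs)
             = of_int (sign \<tau>) * (of_int (sign \<sigma>) * f (permute_list \<sigma> (permute_list \<tau> xs)))"
      using tau \<open>\<sigma> \<in> ?P\<close> by (simp add: permute_list_compose sign_compose[OF pt ps])
  qed simp
  finally have "(\<Sum>\<sigma>\<in>?P. of_int (sign \<sigma>) * f (permute_list \<sigma> xs))
     = of_int (sign \<tau>) * (\<Sum>\<sigma>\<in>?P. of_int (sign \<sigma>) * f (permute_list \<sigma> (permute_list \<tau> xs)))"
    by (simp add: sum_distrib_left)
  then show ?thesis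
    by (metis (no_types, lifting) mult.assoc mult_1 of_int_1 of_int_mult sign_idempotent)
qed

text \<open>An alternating function vanishes on lists with a repeated entry (swap the two copies).\<close>
lemma alternating_nondistinct_zero:
  fixes \<alpha> :: form
  assumes alt: "\<forall>xs \<sigma>. \<sigma> permutes {..<length xs} \<longrightarrow> \<alpha> (permute_list \<sigma> xs) = of_int (sign \<sigma>) * \<alpha> xs"
    and nd: "\<not> distinct xs"
  shows "\<alpha> xs = 0"
proof -
  obtain i j where ij: "i < length xs" "j < length xs" "i \<noteq> j" "xs ! i = xs ! j"
    using nd by (auto simp: distinct_conv_nth)
  let ?t = "Transposition.transpose i j"
  have tp: "?t permutes {..<length xs}" using ij by (intro permutes_swap_id) auto
  have "permute_list ?t xs = xs"
    using ij by (intro nth_equalityI) (auto simp: permute_list_nth[OF tp] Transposition.transpose_def)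
  then have "\<alpha> xs = of_int (sign ?t) * \<alpha> xs" using alt tp by metis
  then show ?thesis using ij by (simp add: sign_swap_id)
qed

lemma idx_permute_list: "\<sigma> permutes {..<length xs} \<Longrightarrow> permute_list \<sigma> xs \<in> idx k \<longleftrightarrow> xs \<in> idx k"
  by (simp add: idx_def)

lemma wedge_alternating:
  "\<forall>xs \<sigma>. \<sigma> permutes {..<length xs} \<longrightarrow> wedge k l \<alpha> \<beta> (permute_list \<sigma> xs) = of_int (sign \<sigma>) * wedge k l \<alpha> \<beta> xs"
proof (intro allI impI)
  fix xs :: "nat list" and \<sigma> assume s: "\<sigma> permutes {..<length xs}"
  show "wedge k l \<alpha> \<beta> (permute_list \<sigma> xs) = of_int (sign \<sigma>) * wedge k l \<alpha> \<beta> xs"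
  proof (cases "xs \<in> idx (k + l)")
    case True
    then have "length xs = k + l" by (simp add: idx_def)
    then have "(\<Sum>\<tau> | \<tau> permutes {..<k + l}. of_int (sign \<tau>) * (\<alpha> (take k (permute_list \<tau> (permute_list \<sigma> xs))) * \<beta> (drop k (permute_list \<tau> (permute_list \<sigma> xs)))))
      = of_int (sign \<sigma>) * (\<Sum>\<tau> | \<tau> permutes {..<k + l}. of_int (sign \<tau>) * (\<alpha> (take k (permute_list \<tau> xs)) * \<beta> (drop k (permute_list \<tau> xs))))"
      using signed_sum_permute_list[OF s, where f = "\<lambda>ys. \<alpha> (take k ys) * \<beta> (drop k ys)"] by simp
    then show ?thesis using True s by (simp add: wedge_def idx_permute_list mult.assoc)
  next
    case False
    then show ?thesis using s by (simp add: wedge_def idx_permute_list)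
  qed
qed

lemma is_form_wedge: "is_form (k + l) (wedge k l \<alpha> \<beta>)"
  unfolding is_form_def
  using wedge_alternating[of k l \<alpha> \<beta>] alternating_nondistinct_zero[OF wedge_alternating[of k l \<alpha> \<beta>]]
  by (auto simp: wedge_def)

lemma is_form_zero: "is_form k (\<lambda>_. 0)"
  by (simp add: is_form_def)

lemma form_mset_eq_sign:
  assumes f: "is_form k \<alpha>" and m: "mset xs = mset ys"
  shows "\<exists>s. (s = 1 \<or> s = -1) \<and> \<alpha> xs = s * \<alpha> ys"
proof -
  obtain p where "p permutes {..<length ys}" "permute_list p ys = xs"
    using mset_eq_permutation[OF m] by blast
  then have "\<alpha> xs = of_int (sign p) * \<alpha> ys" using f unfolding is_form_def by metis
  then show ?thesis by (auto simp: sign_def)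
qed

lemma forms_eqI_sorted:
  assumes fa: "is_form k \<alpha>" and fb: "is_form k \<beta>"
    and agree: "\<And>xs. xs \<in> idx k \<Longrightarrow> sorted xs \<Longrightarrow> distinct xs \<Longrightarrow> \<alpha> xs = \<beta> xs"
  shows "\<alpha> = \<beta>"
proof
  fix xs
  show "\<alpha> xs = \<beta> xs"
  proof (cases "xs \<in> idx k \<and> distinct xs")
    case False
    then show ?thesis using fa fb unfolding is_form_def by metis
  next
    case True
    let ?ys = "sort xs"
    have "mset xs = mset ?ys" by simp
    then obtain p where p: "p permutes {..<length ?ys}" "permute_list p ?ys = xs"
      using mset_eq_permutation by blast
    have ys: "?ys \<in> idx k" "sorted ?ys" "distinct ?ys" using True by (auto simp: idx_def)
    have "\<alpha> xs = of_int (sign p) * \<alpha> ?ys" using fa p unfolding is_form_def by metis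
    moreover have "\<beta> xs = of_int (sign p) * \<beta> ?ys" using fb p unfolding is_form_def by metis
    ultimately show ?thesis using agree[OF ys] by simp
  qed
qed

lemma form2_skew: "is_form 2 \<omega> \<Longrightarrow> \<omega> [b, a] = - \<omega> [a, b]"
proof -
  assume f: "is_form 2 \<omega>"
  let ?t = "Transposition.transpose (0::nat) 1"
  have t: "?t permutes {..<length [a,b]}" by (intro permutes_swap_id) auto
  have "permute_list ?t [a,b] = [b,a]" by (simp add: permute_list_def)
  then show ?thesis using f t unfolding is_form_def
    by (metis sign_swap_id of_int_minus of_int_1 mult_minus1 zero_neq_one)
qed

lemma form2_diag: "is_form 2 \<omega> \<Longrightarrow> \<omega> [a, a] = 0"
  unfolding is_form_def by simp

definition shift_perm :: "(nat \<Rightarrow> nat) \<Rightarrow> nat \<Rightarrow> nat" where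
  "shift_perm \<sigma> = (\<lambda>j. if j = 0 then 0 else Suc (\<sigma> (j - 1)))"

lemma shift_perm_permutes:
  assumes "\<sigma> permutes {..<n}" shows "shift_perm \<sigma> permutes {..<Suc n}"
proof -
  have b: "bij \<sigma>" using assms permutes_bij by blast
  have fixed: "\<And>x. x \<ge> n \<Longrightarrow> \<sigma> x = x" using assms unfolding permutes_def by auto
  show ?thesis unfolding permutes_def
  proof (intro conjI allI)
    fix x show "x \<notin> {..<Suc n} \<longrightarrow> shift_perm \<sigma> x = x" using fixed by (auto simp: shift_perm_def)
  next
    fix y show "\<exists>!x. shift_perm \<sigma> x = y"
    proof (cases y)
      case 0 then show ?thesis by (auto simp: shift_perm_def intro!: exI[of _ 0] split: if_splits)
    next
      case (Suc z)
      obtain w where w: "\<sigma> w = z" using b by (metis bij_pointE)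
      have u: "\<And>w'. \<sigma> w' = z \<Longrightarrow> w' = w" using b w by (metis bij_pointE)
      show ?thesis
      proof (rule ex1I[of _ "Suc w"])
        show "shift_perm \<sigma> (Suc w) = y" using w Suc by (simp add: shift_perm_def)
      qed (use u Suc in \<open>auto simp: shift_perm_def split: if_splits\<close>)
    qed
  qed
qed

lemma sign_shift_perm:
  assumes "\<sigma> permutes {..<n}" shows "sign (shift_perm \<sigma>) = sign \<sigma>"
  using assms finite_lessThan
proof (induction rule: permutes_induct)
  case id
  have "shift_perm id = id" by (auto simp: shift_perm_def fun_eq_iff)
  then show ?case by (simp add: id_def)
next
  case (swap a b p)
  have pS: "p permutes {..<n}" using swap by simp
  have pp: "permutation p" using pS by (auto simp: permutation_permutes)
  have lp: "permutation (shift_perm p)"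
    using shift_perm_permutes[OF pS] by (auto simp: permutation_permutes)
  have "shift_perm (Transposition.transpose a b \<circ> p)
        = Transposition.transpose (Suc a) (Suc b) \<circ> shift_perm p"
    by (auto simp: shift_perm_def fun_eq_iff Transposition.transpose_def)
  then have "sign (shift_perm (Transposition.transpose a b \<circ> p))
        = sign (Transposition.transpose (Suc a) (Suc b)) * sign (shift_perm p)"
    by (simp add: sign_compose[OF permutation_swap_id lp])
  also have "\<dots> = sign (Transposition.transpose a b) * sign p"
    using swap by (simp add: sign_swap_id)
  also have "\<dots> = sign (Transposition.transpose a b \<circ> p)"
    by (rule sign_compose[OF permutation_swap_id pp, symmetric])
  finally show ?case .
qed

lemma permute_list_shift_perm:
  assumes s: "\<sigma> permutes {..<length xs}"
  shows "permute_list (shift_perm \<sigma>) (i # xs) = i # permute_list \<sigma> xs"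
proof (rule nth_equalityI)
  have lp: "shift_perm \<sigma> permutes {..<length (i # xs)}" using shift_perm_permutes[OF s] by simp
  fix j assume "j < length (permute_list (shift_perm \<sigma>) (i # xs))"
  then show "permute_list (shift_perm \<sigma>) (i # xs) ! j = (i # permute_list \<sigma> xs) ! j"
    by (subst permute_list_nth[OF lp], simp) (cases j, simp_all add: shift_perm_def permute_list_nth[OF s])
qed simp

lemma is_form_intp:
  assumes f: "is_form (Suc k) \<nu>"
  shows "is_form k (intp v \<nu>)"
  unfolding is_form_def
proof (intro conjI allI impI)
  fix xs :: "nat list" assume "xs \<notin> idx k"
  then have "\<And>i. i < 6 \<Longrightarrow> i # xs \<notin> idx (Suc k)" by (auto simp: idx_def)
  then show "intp v \<nu> xs = 0" using f unfolding is_form_def intp_def by simp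
next
  fix xs :: "nat list" assume "\<not> distinct xs"
  then show "intp v \<nu> xs = 0" using f unfolding is_form_def intp_def by simp
next
  fix xs :: "nat list" and \<sigma> assume s: "\<sigma> permutes {..<length xs}"
  have "\<nu> (i # permute_list \<sigma> xs) = of_int (sign \<sigma>) * \<nu> (i # xs)" for i
    using f shift_perm_permutes[OF s] unfolding is_form_def
    by (metis permute_list_shift_perm[OF s] sign_shift_perm[OF s] length_Cons)
  then show "intp v \<nu> (permute_list \<sigma> xs) = of_int (sign \<sigma>) * intp v \<nu> xs"
    by (simp add: intp_def sum_distrib_left algebra_simps)
qed

lemma intp_unitv:
  assumes j: "j < 6" shows "intp (unitv j) \<alpha> xs = \<alpha> (j # xs)"
proof -
  have "intp (unitv j) \<alpha> xs = (\<Sum>i<6. if i = j then \<alpha> (j # xs) else 0)"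
    unfolding intp_def unitv_def by (rule sum.cong) auto
  then show ?thesis using j by simp
qed

section \<open>Top-degree forms and the trivialisation kappa\<close>

text \<open>The increasing list of all indices except m; these index the components of 5-forms.\<close>
definition omit :: "nat \<Rightarrow> nat list" where
  "omit m = filter (\<lambda>i. i \<noteq> m) [0..<6]"

lemma in_set_omit: "i \<noteq> m \<Longrightarrow> i < 6 \<Longrightarrow> i \<in> set (omit m)"
  by (auto simp: omit_def)

lemma length_omit: "m < 6 \<Longrightarrow> length (omit m) = 5"
  by (auto simp: omit_def upt_6 dest!: less_6_cases)

lemma mset_omit: "m < 6 \<Longrightarrow> mset (m # omit m) = mset [0..<6]"
  by (auto simp: omit_def upt_6 add_mset_commute dest!: less_6_cases)

lemma sorted_idx_5:
  assumes "xs \<in> idx 5" "sorted xs" "distinct xs"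
  shows "\<exists>m<6. xs = omit m"
proof -
  have sub: "set xs \<subseteq> {..<6}" and c: "card (set xs) = 5"
    using assms by (auto simp: idx_def distinct_card)
  have "\<not> {..<6} \<subseteq> set xs"
  proof
    assume "{..<6} \<subseteq> set xs"
    then have "card {..<6::nat} \<le> card (set xs)" by (intro card_mono) auto
    then show False using c by simp
  qed
  then obtain m where m: "m < 6" "m \<notin> set xs" by auto
  have "set xs \<subseteq> {..<6} - {m}" using sub m by auto
  moreover have "card ({..<6::nat} - {m}) = 5" using m by simp
  ultimately have "set xs = {..<6} - {m}" using c by (intro card_subset_eq) auto
  then have "set xs = set (omit m)" by (auto simp: omit_def)
  moreover have "sorted (omit m)" unfolding omit_def by (rule sorted_wrt_filter) simp
  moreover have "distinct (omit m)" by (simp add: omit_def)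
  ultimately have "xs = omit m" using sorted_distinct_set_unique assms(2,3) by blast
  then show ?thesis using m by blast
qed

lemma sorted_idx_6:
  assumes "xs \<in> idx 6" "sorted xs" "distinct xs"
  shows "xs = [0..<6]"
proof -
  have "set xs \<subseteq> {..<6}" "card (set xs) = 6"
    using assms by (auto simp: idx_def distinct_card)
  then have "set xs = {..<6}" by (intro card_subset_eq) auto
  moreover have "set [0..<6] = {..<(6::nat)}" by auto
  ultimately show ?thesis
    using sorted_distinct_set_unique[OF assms(2,3) sorted_upt distinct_upt] by simp
qed

lemma intp_omit:
  assumes f: "is_form 6 \<nu>" and m: "m < 6"
  shows "intp w \<nu> (omit m) = w m * \<nu> (m # omit m)"
proof -
  have "intp w \<nu> (omit m) = (\<Sum>i<6. if i = m then w m * \<nu> (m # omit m) else 0)"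
    unfolding intp_def
  proof (rule sum.cong)
    fix i assume "i \<in> {..<6::nat}"
    then show "w i * \<nu> (i # omit m) = (if i = m then w m * \<nu> (m # omit m) else 0)"
      using f in_set_omit[of i m] unfolding is_form_def by auto
  qed simp
  then show ?thesis using m by simp
qed

lemma top_form_omit_nonzero:
  assumes f: "is_form 6 \<nu>" and N: "\<nu> [0..<6] \<noteq> 0" and m: "m < 6"
  shows "\<nu> (m # omit m) \<noteq> 0"
  using form_mset_eq_sign[OF f mset_omit[OF m]] N by auto

lemma kappa_components:
  assumes f6: "is_form 6 \<nu>" and N: "\<nu> [0..<6] \<noteq> 0" and f5: "is_form 5 \<eta>" and m: "m < 6"
  shows "kappa \<nu> \<eta> m * \<nu> (m # omit m) = \<eta> (omit m)"
proof -
  define v where "v = (\<lambda>m. if m < 6 then \<eta> (omit m) / \<nu> (m # omit m) else 0)"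
  have iv: "intp v \<nu> = \<eta>"
  proof (rule forms_eqI_sorted[OF is_form_intp f5])
    show "is_form (Suc 5) \<nu>" using f6 by simp
    fix xs assume "xs \<in> idx 5" "sorted xs" "distinct xs"
    then obtain m where m: "m < 6" "xs = omit m" using sorted_idx_5 by blast
    then show "intp v \<nu> xs = \<eta> xs"
      using intp_omit[OF f6 m(1)] top_form_omit_nonzero[OF f6 N m(1)] by (simp add: v_def)
  qed
  have unique: "w = v" if w: "w \<in> V" "intp w \<nu> = \<eta>" for w
  proof
    fix m show "w m = v m"
    proof (cases "m < 6")
      case True
      have "w m * \<nu> (m # omit m) = \<eta> (omit m)" using intp_omit[OF f6 True, of w] w by simp
      then show ?thesis using True top_form_omit_nonzero[OF f6 N True] by (simp add: v_def field_simps)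
    next
      case False
      then show ?thesis using w by (simp add: V_def v_def)
    qed
  qed
  have "v \<in> V" by (simp add: V_def v_def)
  then have "kappa \<nu> \<eta> = v"
    unfolding kappa_def using iv unique by blast
  moreover have "v m * \<nu> (m # omit m) = \<eta> (omit m)" using intp_omit[OF f6 m, of v] iv by simp
  ultimately show ?thesis by simp
qed

section \<open>Positivity of the metric forces a volume form\<close>

lemma ev2_uminus_left: "ev2 \<omega> (\<lambda>m. - x m) y = - ev2 \<omega> x y"
  by (simp add: ev2_def sum_negf)

lemma Kmap_uminus_degenerate:
  assumes "cube \<omega> = (\<lambda>_. 0)"
  shows "Kmap \<omega> \<rho> (\<lambda>m. - x m) = Kmap \<omega> \<rho> x"
proof -
  have "intp v (\<lambda>_. 0) = (\<lambda>_. 0)" for v by (simp add: intp_def fun_eq_iff)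
  moreover have "intp (\<lambda>m. - x m) \<rho> = (\<lambda>xs. - intp x \<rho> xs)"
    by (simp add: intp_def fun_eq_iff sum_negf)
  moreover have "wedge k l (\<lambda>xs. - \<alpha> xs) \<beta> = (\<lambda>xs. - wedge k l \<alpha> \<beta> xs)" for k l \<alpha> \<beta>
    by (simp add: wedge_def fun_eq_iff sum_negf)
  moreover have "((\<lambda>_. 0) = (\<lambda>xs. - \<eta> xs)) = ((\<lambda>_. 0::real) = \<eta>)" for \<eta> :: form
    by (auto simp: fun_eq_iff)
  ultimately show ?thesis
    unfolding Kmap_def kappa_def assms by simp
qed

lemma unitv_V: "i < 6 \<Longrightarrow> unitv i \<in> V"
  by (simp add: V_def unitv_def)

lemma unitv_nonzero: "unitv i \<noteq> (\<lambda>_. 0)"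
  by (auto simp: unitv_def fun_eq_iff)

text \<open>A positive definite induced metric requires omega^3 to be a volume form: otherwise
  the metric would take opposite values on e1 and -e1.\<close>
lemma volume_nonzero:
  assumes pos: "\<forall>x\<in>V. x \<noteq> (\<lambda>_. 0) \<longrightarrow> metric \<omega> \<rho> x x > 0"
  shows "cube \<omega> [0..<6] \<noteq> 0"
proof
  assume N: "cube \<omega> [0..<6] = 0"
  have "is_form 6 (cube \<omega>)" unfolding cube_def using is_form_wedge[of 2 4] by simp
  then have c0: "cube \<omega> = (\<lambda>_. 0)"
    by (rule forms_eqI_sorted[OF _ is_form_zero]) (use N sorted_idx_6 in auto)
  let ?x = "unitv 0" let ?y = "\<lambda>m. - unitv 0 m"
  have "?y \<in> V" "?y \<noteq> (\<lambda>_. 0)" by (auto simp: V_def unitv_def fun_eq_iff)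
  then have "metric \<omega> \<rho> ?y ?y > 0" using pos by blast
  moreover have "metric \<omega> \<rho> ?x ?x > 0" using pos unitv_V[of 0] unitv_nonzero[of 0] by auto
  moreover have "Jmap \<omega> \<rho> ?y = Jmap \<omega> \<rho> ?x" unfolding Jmap_def Kmap_uminus_degenerate[OF c0] ..
  then have "metric \<omega> \<rho> ?y ?y = - metric \<omega> \<rho> ?x ?x"
    unfolding metric_def by (simp add: ev2_uminus_left)
  ultimately show False by simp
qed

section \<open>Part 1: omega pairs the centre nondegenerately\<close>

text \<open>d rho = 0 evaluated on (e1,e2,f3,f1), (e1,e2,f3,f2), (f1,f2,e3,e1), (f1,f2,e3,e2).\<close>
lemma closed_rho_components:
  assumes "dform 3 \<rho> = (\<lambda>_. 0)"
  shows "\<rho> [2,5,3] = 0" "\<rho> [2,5,4] = 0" "\<rho> [5,2,0] = 0" "\<rho> [5,2,1] = 0"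
proof -
  have "dform 3 \<rho> [0,1,5,3] = 0" "dform 3 \<rho> [0,1,5,4] = 0" "dform 3 \<rho> [3,4,2,0] = 0" "dform 3 \<rho> [3,4,2,1] = 0"
    using assms by simp_all
  then show "\<rho> [2,5,3] = 0" "\<rho> [2,5,4] = 0" "\<rho> [5,2,0] = 0" "\<rho> [5,2,1] = 0"
    by (simp_all add: dform_def idx_def intp_def sum_lessThan_6 pair_sum_4 lb_def unitv_def upt_4)
qed

lemma closed_rho_centre_zero:
  assumes f: "is_form 3 \<rho>" and d: "dform 3 \<rho> = (\<lambda>_. 0)"
    and xs: "2 \<in> set xs" "5 \<in> set xs"
  shows "\<rho> xs = 0"
proof (cases "length xs = 3")
  case False
  then have "xs \<notin> idx 3" by (simp add: idx_def)
  then show ?thesis using f unfolding is_form_def by blast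
next
  case True
  then obtain a b c where "xs = [a,b,c]"
    by (metis (no_types, lifting) length_0_conv length_Suc_conv numeral_3_eq_3)
  then obtain k where m: "mset xs = mset [2,5,k]" using xs by (auto simp: add_mset_commute)
  have "\<rho> [2,5,k] = 0"
  proof (cases "k \<in> {0,1,3,4}")
    case True
    have "\<rho> [5,2,k] = 0 \<Longrightarrow> \<rho> [2,5,k] = 0"
      using form_mset_eq_sign[OF f, of "[2,5,k]" "[5,2,k]"] by auto
    then show ?thesis using True closed_rho_components[OF d] by auto
  next
    case False
    then have "[2,5,k] \<notin> idx 3 \<or> \<not> distinct [2,5,k]" by (auto simp: idx_def)
    then show ?thesis using f unfolding is_form_def by blast
  qed
  then show ?thesis using form_mset_eq_sign[OF f m] by auto
qed

text \<open>Consequently (e3 _| rho) /\ rho vanishes on every five basis vectors containing e3 and f3: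
  each term of the wedge has both central indices either in rho or in e3 _| rho.\<close>
lemma closed_rho_contract_e3_wedge:
  assumes f: "is_form 3 \<rho>" and d: "dform 3 \<rho> = (\<lambda>_. 0)"
    and m: "m < 6" "m \<noteq> 2" "m \<noteq> 5"
  shows "wedge 2 3 (intp (unitv 2) \<rho>) \<rho> (omit m) = 0"
proof -
  have term_zero: "intp (unitv 2) \<rho> (take 2 ys) * \<rho> (drop 2 ys) = 0"
    if ys: "2 \<in> set ys" "5 \<in> set ys" for ys :: "nat list"
  proof -
    have split: "set ys = set (take 2 ys) \<union> set (drop 2 ys)"
      by (metis append_take_drop_id set_append)
    consider (head) "\<rho> (2 # take 2 ys) = 0" | (tail) "2 \<in> set (drop 2 ys)" "5 \<in> set (drop 2 ys)"
    proof -
      have "\<rho> (2 # take 2 ys) = 0" if "2 \<in> set (take 2 ys) \<or> 5 \<in> set (take 2 ys)"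
        using that f closed_rho_centre_zero[OF f d, of "2 # take 2 ys"] unfolding is_form_def by auto
      then show ?thesis using that ys split by auto
    qed
    then show ?thesis
    proof cases
      case head
      then show ?thesis by (simp add: intp_unitv)
    next
      case tail
      then show ?thesis using closed_rho_centre_zero[OF f d] by simp
    qed
  qed
  have "of_int (sign \<sigma>) * (intp (unitv 2) \<rho> (take 2 (permute_list \<sigma> (omit m)))
          * \<rho> (drop 2 (permute_list \<sigma> (omit m)))) = 0"
    if "\<sigma> permutes {..<2 + 3}" for \<sigma>
  proof -
    have "set (permute_list \<sigma> (omit m)) = set (omit m)"
      using that length_omit[OF m(1)] by simp
    then show ?thesis using term_zero m in_set_omit by simp
  qed
  then show ?thesis unfolding wedge_def by (simp add: sum.neutral)
qed

lemma ev2_unitv_left: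
  assumes "i < 6" shows "ev2 \<omega> (unitv i) y = (\<Sum>j<6. \<omega> [i, j] * y j)"
proof -
  have "ev2 \<omega> (unitv i) y = (\<Sum>k<6. if k = i then (\<Sum>j<6. \<omega> [i, j] * y j) else 0)"
    unfolding ev2_def unitv_def by (rule sum.cong) auto
  then show ?thesis using assms by simp
qed

lemma ev2_unitv:
  assumes "i < 6" "j < 6" shows "ev2 \<omega> (unitv i) (unitv j) = \<omega> [i, j]"
proof -
  have "ev2 \<omega> (unitv i) (unitv j) = (\<Sum>k<6. if k = j then \<omega> [i, j] else 0)"
    unfolding ev2_unitv_left[OF assms(1)] by (rule sum.cong) (auto simp: unitv_def)
  then show ?thesis using assms by simp
qed

text \<open>Part 1 of the theorem: K_rho(e3) lies in the centre span{e3,f3}, so if omega(e3,f3) = 0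
  then e3 would be a null vector of the induced metric.\<close>
lemma omega_centre_nonzero:
  assumes hf: "half_flat \<omega> \<rho>"
  shows "\<omega> [2,5] \<noteq> 0"
proof
  assume w25: "\<omega> [2,5] = 0"
  have fw: "is_form 2 \<omega>" and fr: "is_form 3 \<rho>" and d: "dform 3 \<rho> = (\<lambda>_. 0)"
    and pos: "\<forall>x\<in>V. x \<noteq> (\<lambda>_. 0) \<longrightarrow> metric \<omega> \<rho> x x > 0"
    using hf by (auto simp: half_flat_def SU3_structure_def compatible_normalised_def nondeg2_def stable3_def)
  have N: "cube \<omega> [0..<6] \<noteq> 0" by (rule volume_nonzero[OF pos])
  have f6: "is_form 6 (cube \<omega>)" unfolding cube_def using is_form_wedge[of 2 4] by simp
  have f5: "is_form 5 (wedge 2 3 (intp (unitv 2) \<rho>) \<rho>)" using is_form_wedge[of 2 3] by simp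
  have K_central: "Kmap \<omega> \<rho> (unitv 2) m = 0" if m: "m < 6" "m \<noteq> 2" "m \<noteq> 5" for m
  proof -
    have "Kmap \<omega> \<rho> (unitv 2) m * cube \<omega> (m # omit m) = 0"
      using kappa_components[OF f6 N f5 m(1)] closed_rho_contract_e3_wedge[OF fr d m]
      by (simp add: Kmap_def)
    then show ?thesis using top_form_omit_nonzero[OF f6 N m(1)] by simp
  qed
  have "\<omega> [2, j] * Jmap \<omega> \<rho> (unitv 2) j = 0" if "j < 6" for j
    using that w25 form2_diag[OF fw] K_central[of j] by (cases "j = 2 \<or> j = 5") (auto simp: Jmap_def)
  then have "ev2 \<omega> (unitv 2) (Jmap \<omega> \<rho> (unitv 2)) = 0"
    by (auto simp: ev2_unitv_left intro!: sum.neutral)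
  then have "metric \<omega> \<rho> (unitv 2) (unitv 2) = 0" by (simp add: metric_def)
  moreover have "metric \<omega> \<rho> (unitv 2) (unitv 2) > 0" using pos unitv_V[of 2] unitv_nonzero[of 2] by auto
  ultimately show False by simp
qed

section \<open>Closedness of omega^2\<close>

lemma sum_permutes_insert_sign:
  fixes F :: "(nat \<Rightarrow> nat) \<Rightarrow> real"
  assumes "finite S" "a \<notin> S"
  shows "(\<Sum>p | p permutes insert a S. of_int (sign p) * F p)
    = (\<Sum>b\<in>insert a S. \<Sum>q | q permutes S. of_int (sign q) *
         (of_int (sign (Transposition.transpose a b)) * F (Transposition.transpose a b \<circ> q)))"
proof -
  have sign_comp: "sign (Transposition.transpose a b \<circ> q) = sign (Transposition.transpose a b) * sign q"
    if "q \<in> {q. q permutes S}" for q b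
  proof -
    have "permutation q" using that assms(1) by (auto simp: permutation_permutes)
    then show ?thesis by (rule sign_compose[OF permutation_swap_id])
  qed
  show ?thesis
    unfolding sum_over_permutations_insert[OF assms]
    by (rule sum.cong[OF refl], rule sum.cong[OF refl]) (simp add: sign_comp)
qed

lemma permutes_empty_nat: "{p. p permutes ({}::nat set)} = {id}"
  by auto

lemma signed_perm_sum_4:
  fixes G :: "nat list \<Rightarrow> real"
  shows "(\<Sum>p | p permutes {..<4}. of_int (sign p) * G (permute_list p [x0,x1,x2,x3]))
    = G [x0,x1,x2,x3] - G [x0,x1,x3,x2] - G [x0,x2,x1,x3] + G [x0,x2,x3,x1] + G [x0,x3,x1,x2] - G [x0,x3,x2,x1]
    - G [x1,x0,x2,x3] + G [x1,x0,x3,x2] + G [x1,x2,x0,x3] - G [x1,x2,x3,x0] - G [x1,x3,x0,x2] + G [x1,x3,x2,x0]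
    + G [x2,x0,x1,x3] - G [x2,x0,x3,x1] - G [x2,x1,x0,x3] + G [x2,x1,x3,x0] + G [x2,x3,x0,x1] - G [x2,x3,x1,x0]
    - G [x3,x0,x1,x2] + G [x3,x0,x2,x1] + G [x3,x1,x0,x2] - G [x3,x1,x2,x0] - G [x3,x2,x0,x1] + G [x3,x2,x1,x0]"
proof -
  have e: "{..<4::nat} = insert 3 (insert 2 (insert 1 (insert 0 {})))" by auto
  have n3: "(3::nat) \<notin> insert 2 (insert 1 (insert 0 {}))" and n2: "(2::nat) \<notin> insert 1 (insert 0 {})"
    and n1: "(1::nat) \<notin> insert 0 {}" and n0: "(0::nat) \<notin> {}" by auto
  have fin: "finite (insert 2 (insert 1 (insert 0 ({}::nat set))))" "finite (insert 1 (insert 0 ({}::nat set)))"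
    "finite (insert 0 ({}::nat set))" "finite ({}::nat set)" by auto
  show ?thesis
    apply (simp only: e)
    apply (simp only: sum_permutes_insert_sign[of "insert 2 (insert 1 (insert 0 {}))" 3, OF _ n3]
        sum_permutes_insert_sign[of "insert 1 (insert 0 {})" 2, OF _ n2]
        sum_permutes_insert_sign[of "insert 0 {}" 1, OF _ n1] sum_permutes_insert_sign[of "{}" 0, OF _ n0] fin)
    apply (simp only: permutes_empty_nat sum.insert finite.emptyI finite_insert insert_iff empty_iff sum.empty)
    apply (simp add: sign_swap_id)
    apply (simp add: permute_list_def upt_rec Transposition.transpose_def)
    done
qed

lemma wedge_2_2_components:
  assumes f: "is_form 2 \<omega>" and abcd: "a < 6" "b < 6" "c < 6" "d < 6"
  shows "wedge 2 2 \<omega> \<omega> [a,b,c,d] = 2 * (\<omega> [a,b] * \<omega> [c,d] - \<omega> [a,c] * \<omega> [b,d] + \<omega> [a,d] * \<omega> [b,c])"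
proof -
  have i: "[a,b,c,d] \<in> idx (2+2)" using abcd by (auto simp: idx_def)
  have sk: "\<And>x y. \<omega> [y, x] = - \<omega> [x, y]" using form2_skew[OF f] by blast
  have "wedge 2 2 \<omega> \<omega> [a,b,c,d] = (\<Sum>p | p permutes {..<4}. of_int (sign p) *
          (\<lambda>ys. \<omega> (take 2 ys) * \<omega> (drop 2 ys)) (permute_list p [a,b,c,d])) / 4"
    unfolding wedge_def using i by (simp add: mult.assoc)
  also have "\<dots> = 2 * (\<omega> [a,b] * \<omega> [c,d] - \<omega> [a,c] * \<omega> [b,d] + \<omega> [a,d] * \<omega> [b,c])"
    by (subst signed_perm_sum_4[of "\<lambda>ys. \<omega> (take 2 ys) * \<omega> (drop 2 ys)" a b c d],
        simp add: sk[of a b] sk[of a c] sk[of a d] sk[of b c] sk[of b d] sk[of c d] algebra_simps)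
       (simp add: field_simps)
  finally show ?thesis .
qed

lemma intp_lb_unitv:
  "intp (lb (unitv i) (unitv j)) F ys =
    (if i = 0 \<and> j = 1 then - F (2 # ys) else if i = 1 \<and> j = 0 then F (2 # ys)
     else if i = 3 \<and> j = 4 then - F (5 # ys) else if i = 4 \<and> j = 3 then F (5 # ys) else 0)"
  by (auto simp: intp_def lb_def unitv_def sum_lessThan_6)

text \<open>d(omega^2) = 0 on (e1,e2,f1,f2,f3) and on (e1,e2,e3,f1,f2) gives two Pluecker-type
  relations among the components of omega.\<close>
lemma closed_omega_sq_relations:
  assumes f: "is_form 2 \<omega>" and d: "dform 4 (wedge 2 2 \<omega> \<omega>) = (\<lambda>_. 0)"
  shows "\<omega> [2,3] * \<omega> [4,5] - \<omega> [2,4] * \<omega> [3,5] + \<omega> [2,5] * \<omega> [3,4] = 0"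
    "\<omega> [0,1] * \<omega> [2,5] - \<omega> [0,2] * \<omega> [1,5] + \<omega> [0,5] * \<omega> [1,2] = 0"
proof -
  have nd: "\<And>xs. \<not> distinct xs \<Longrightarrow> wedge 2 2 \<omega> \<omega> xs = 0"
    using is_form_wedge[of 2 2 \<omega> \<omega>] unfolding is_form_def by blast
  have "dform 4 (wedge 2 2 \<omega> \<omega>) [0,1,3,4,5] = 0" "dform 4 (wedge 2 2 \<omega> \<omega>) [0,1,2,3,4] = 0"
    using d by simp_all
  then have v: "wedge 2 2 \<omega> \<omega> [2,3,4,5] = 0" "wedge 2 2 \<omega> \<omega> [5,0,1,2] = 0"
    by (simp_all add: dform_def idx_def pair_sum_5 upt_5 intp_lb_unitv nd)
  show "\<omega> [2,3] * \<omega> [4,5] - \<omega> [2,4] * \<omega> [3,5] + \<omega> [2,5] * \<omega> [3,4] = 0"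
    using v(1) wedge_2_2_components[OF f, of 2 3 4 5] by simp
  have "\<omega> [5,0] = - \<omega> [0,5]" "\<omega> [5,1] = - \<omega> [1,5]" "\<omega> [5,2] = - \<omega> [2,5]"
    by (rule form2_skew[OF f])+
  then show "\<omega> [0,1] * \<omega> [2,5] - \<omega> [0,2] * \<omega> [1,5] + \<omega> [0,5] * \<omega> [1,2] = 0"
    using v(2) wedge_2_2_components[OF f, of 5 0 1 2] by (simp add: algebra_simps)
qed

section \<open>Part 2: a standard basis adapted to omega\<close>

definition lin2 :: "real \<Rightarrow> vec \<Rightarrow> real \<Rightarrow> vec \<Rightarrow> vec" where
  "lin2 a x b y = (\<lambda>m. a * x m + b * y m)"

lemma ev2_lin2_left: "ev2 \<omega> (lin2 a x b y) z = a * ev2 \<omega> x z + b * ev2 \<omega> y z"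
  by (simp add: ev2_def lin2_def algebra_simps sum.distrib sum_distrib_left)

lemma ev2_lin2_right: "ev2 \<omega> z (lin2 a x b y) = a * ev2 \<omega> z x + b * ev2 \<omega> z y"
  by (simp add: ev2_def lin2_def algebra_simps sum.distrib sum_distrib_left)

definition scal :: "real \<Rightarrow> vec \<Rightarrow> vec" where
  "scal a x = (\<lambda>m. a * x m)"

lemma ev2_scal_left: "ev2 \<omega> (scal a x) y = a * ev2 \<omega> x y"
  by (simp add: ev2_def scal_def sum_distrib_left algebra_simps)

lemma ev2_scal_right: "ev2 \<omega> y (scal a x) = a * ev2 \<omega> y x"
  by (simp add: ev2_def scal_def sum_distrib_left algebra_simps)

lemma ev2_comb_left: "ev2 \<omega> (comb b v) y = (\<Sum>k<6. v k * ev2 \<omega> (b k) y)"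
  by (simp add: ev2_def comb_def sum_distrib_left sum_distrib_right algebra_simps)
    (subst sum.swap, rule sum.cong[OF refl], subst sum.swap, simp add: sum_distrib_left mult_ac)

text \<open>A family whose Gram matrix under omega is a nonzero multiple of the standard symplectic
  matrix is linearly independent: pairing a vanishing combination with b(k+3) resp. b(k-3)
  isolates the coefficient of b k.\<close>
lemma symplectic_gram_independent:
  assumes gram: "\<forall>i<6. \<forall>j<6. ev2 \<omega> (b i) (b j) = c * stdform i j" and c: "c \<noteq> 0"
    and z: "comb b v = (\<lambda>_. 0)"
  shows "\<forall>k<6. v k = 0"
proof -
  have pair: "(\<Sum>k<6. v k * (c * stdform k j)) = 0" if j: "j < 6" for j
  proof -
    have "(\<Sum>k<6. v k * (c * stdform k j)) = (\<Sum>k<6. v k * ev2 \<omega> (b k) (b j))"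
      using j gram by (auto intro: sum.cong[OF refl])
    also have "\<dots> = ev2 \<omega> (comb b v) (b j)" by (simp add: ev2_comb_left)
    also have "\<dots> = 0" using z by (simp add: ev2_def)
    finally show ?thesis .
  qed
  show ?thesis
  proof (intro allI impI)
    fix k :: nat assume "k < 6"
    then consider "k = 0" | "k = 1" | "k = 2" | "k = 3" | "k = 4" | "k = 5" by linarith
    then show "v k = 0"
      by cases (use pair[of 0] pair[of 1] pair[of 2] pair[of 3] pair[of 4] pair[of 5] c in
                \<open>simp_all add: sum_lessThan_6 stdform_def\<close>)
  qed
qed

lemma singular_2x2_left_kernel:
  fixes p q r s :: real
  assumes "p * s - q * r = 0"
  obtains a b where "a \<noteq> 0 \<or> b \<noteq> 0" "a * p + b * r = 0" "a * q + b * s = 0"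
proof (cases "p \<noteq> 0 \<or> r \<noteq> 0")
  case True
  then show ?thesis using assms by (intro that[of r "- p"]) (auto simp: algebra_simps)
next
  case False
  show ?thesis
  proof (cases "q \<noteq> 0 \<or> s \<noteq> 0")
    case True
    then show ?thesis using False by (intro that[of s "- q"]) (auto simp: algebra_simps)
  next
    case False
    then show ?thesis using \<open>\<not> (p \<noteq> 0 \<or> r \<noteq> 0)\<close> by (intro that[of 1 0]) auto
  qed
qed

text \<open>The coefficients making e_k + (coef_e3 k) e3 + (coef_f3 k) f3 omega-orthogonal to e3 and f3,
  the resulting projections perp k, and the pairing omega_perp k l = omega(perp k, perp l).\<close>
definition coef_e3 :: "form \<Rightarrow> nat \<Rightarrow> real" where
  "coef_e3 \<omega> k = - \<omega> [k,5] / \<omega> [2,5]"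

definition coef_f3 :: "form \<Rightarrow> nat \<Rightarrow> real" where
  "coef_f3 \<omega> k = \<omega> [k,2] / \<omega> [2,5]"

definition perp :: "form \<Rightarrow> nat \<Rightarrow> vec" where
  "perp \<omega> k = lin2 1 (unitv k) 1 (lin2 (coef_e3 \<omega> k) (unitv 2) (coef_f3 \<omega> k) (unitv 5))"

definition omega_perp :: "form \<Rightarrow> nat \<Rightarrow> nat \<Rightarrow> real" where
  "omega_perp \<omega> k l = \<omega> [k,l] + coef_e3 \<omega> l * \<omega> [k,2] + coef_f3 \<omega> l * \<omega> [k,5]"

definition det_perp :: "form \<Rightarrow> real" where
  "det_perp \<omega> = omega_perp \<omega> 0 3 * omega_perp \<omega> 1 4 - omega_perp \<omega> 0 4 * omega_perp \<omega> 1 3"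

text \<open>The adapted basis: perp 0, perp 1, e3, the combinations of perp 3, perp 4 dual to
  perp 0, perp 1, and a rescaled f3.\<close>
definition adapted_basis :: "form \<Rightarrow> nat \<Rightarrow> vec" where
  "adapted_basis \<omega> i =
    (if i = 0 then perp \<omega> 0 else if i = 1 then perp \<omega> 1 else if i = 2 then unitv 2
     else if i = 3 then lin2 (omega_perp \<omega> 1 4 / \<omega> [2,5]) (perp \<omega> 3) (- omega_perp \<omega> 1 3 / \<omega> [2,5]) (perp \<omega> 4)
     else if i = 4 then lin2 (- omega_perp \<omega> 0 4 / \<omega> [2,5]) (perp \<omega> 3) (omega_perp \<omega> 0 3 / \<omega> [2,5]) (perp \<omega> 4)
     else if i = 5 then scal (det_perp \<omega> / (\<omega> [2,5])\<^sup>2) (unitv 5) else (\<lambda>_. 0))"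

lemma adapted_basis_components:
  "adapted_basis \<omega> i 0 = (if i = 0 then 1 else 0)"
  "adapted_basis \<omega> i (Suc 0) = (if i = 1 then 1 else 0)"
  "adapted_basis \<omega> i 3 = (if i = 3 then omega_perp \<omega> 1 4 / \<omega> [2,5]
     else if i = 4 then - omega_perp \<omega> 0 4 / \<omega> [2,5] else 0)"
  "adapted_basis \<omega> i 4 = (if i = 3 then - omega_perp \<omega> 1 3 / \<omega> [2,5]
     else if i = 4 then omega_perp \<omega> 0 3 / \<omega> [2,5] else 0)"
  by (auto simp: adapted_basis_def lin2_def scal_def perp_def unitv_def)

lemma adapted_basis_V: "adapted_basis \<omega> i \<in> V"
  by (auto simp: adapted_basis_def V_def lin2_def scal_def perp_def unitv_def)

text \<open>The bracket relations of a standard basis: only [b0,b1] = -b2 and [b3,b4] = -b5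
  survive, the latter because det_perp is the determinant of the (3,4)-block.\<close>
lemma adapted_basis_bracket:
  assumes c: "\<omega> [2,5] \<noteq> 0"
  shows "lb (adapted_basis \<omega> i) (adapted_basis \<omega> j) = comb (adapted_basis \<omega>) (lb (unitv i) (unitv j))"
proof
  fix m
  let ?b = "adapted_basis \<omega>"
  have block_e: "?b i 0 * ?b j 1 - ?b i 1 * ?b j 0 = unitv i 0 * unitv j 1 - unitv i 1 * unitv j 0"
    by (simp add: adapted_basis_components unitv_def)
  have block_f: "?b i 3 * ?b j 4 - ?b i 4 * ?b j 3
      = (unitv i 3 * unitv j 4 - unitv i 4 * unitv j 3) * (det_perp \<omega> / (\<omega> [2,5])\<^sup>2)"
    using c by (cases "i = 3"; cases "i = 4"; cases "j = 3"; cases "j = 4")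
      (simp_all add: adapted_basis_components unitv_def det_perp_def field_simps power2_eq_square)
  have "comb ?b (lb (unitv i) (unitv j)) m
      = lb (unitv i) (unitv j) 2 * ?b 2 m + lb (unitv i) (unitv j) 5 * ?b 5 m"
    by (simp add: comb_def sum_lessThan_6 lb_def)
  then show "lb (?b i) (?b j) m = comb ?b (lb (unitv i) (unitv j)) m"
    using block_e block_f by (simp add: lb_def adapted_basis_def scal_def unitv_def)
qed

context
  fixes \<omega> :: form
  assumes form: "is_form 2 \<omega>" and centre_pairing: "\<omega> [2,5] \<noteq> 0"
begin

lemma skew: "\<omega> [y, x] = - \<omega> [x, y]"
  using form2_skew[OF form] .

lemma perp_orth_centre:
  assumes "k < 6"
  shows "ev2 \<omega> (perp \<omega> k) (unitv 2) = 0" "ev2 \<omega> (perp \<omega> k) (unitv 5) = 0"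
    "ev2 \<omega> (unitv 2) (perp \<omega> k) = 0" "ev2 \<omega> (unitv 5) (perp \<omega> k) = 0"
  using assms centre_pairing
  by (simp_all add: perp_def ev2_lin2_left ev2_lin2_right ev2_unitv form2_diag[OF form]
      skew[of 2 5] skew[of k 2] skew[of k 5] coef_e3_def coef_f3_def)

lemma ev2_perp: "k < 6 \<Longrightarrow> l < 6 \<Longrightarrow> ev2 \<omega> (perp \<omega> k) (perp \<omega> l) = omega_perp \<omega> k l"
  using perp_orth_centre(3,4)[of l]
  by (simp add: perp_def[of \<omega> k] ev2_lin2_left)
    (simp add: perp_def ev2_lin2_right ev2_unitv omega_perp_def)

lemma omega_perp_diag: "omega_perp \<omega> k k = 0"
  using centre_pairing by (simp add: omega_perp_def coef_e3_def coef_f3_def form2_diag[OF form] field_simps)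

lemma omega_perp_skew: "omega_perp \<omega> l k = - omega_perp \<omega> k l"
  using centre_pairing
  by (simp add: omega_perp_def coef_e3_def coef_f3_def skew[of k l] skew[of k 2] skew[of l 2]
      skew[of k 5] skew[of l 5] field_simps)

text \<open>The two relations from d(omega^2) = 0 say exactly that perp 0, perp 1 and perp 3, perp 4
  span omega-isotropic planes.\<close>
lemma omega_perp_01:
  "\<omega> [0,1] * \<omega> [2,5] - \<omega> [0,2] * \<omega> [1,5] + \<omega> [0,5] * \<omega> [1,2] = 0 \<Longrightarrow> omega_perp \<omega> 0 1 = 0"
  using centre_pairing by (simp add: omega_perp_def coef_e3_def coef_f3_def field_simps skew[of 1 5] skew[of 2 1])

lemma omega_perp_34:
  "\<omega> [2,3] * \<omega> [4,5] - \<omega> [2,4] * \<omega> [3,5] + \<omega> [2,5] * \<omega> [3,4] = 0 \<Longrightarrow> omega_perp \<omega> 3 4 = 0"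
  using centre_pairing by (simp add: omega_perp_def coef_e3_def coef_f3_def field_simps skew[of 2 3] skew[of 2 4])

lemma perp_decomposition:
  assumes y: "y \<in> V"
  shows "y = lin2 (y 0) (perp \<omega> 0) 1 (lin2 (y 1) (perp \<omega> 1) 1 (lin2 (y 3) (perp \<omega> 3) 1 (lin2 (y 4) (perp \<omega> 4) 1
     (lin2 (y 2 - (y 0 * coef_e3 \<omega> 0 + y 1 * coef_e3 \<omega> 1 + y 3 * coef_e3 \<omega> 3 + y 4 * coef_e3 \<omega> 4)) (unitv 2)
           (y 5 - (y 0 * coef_f3 \<omega> 0 + y 1 * coef_f3 \<omega> 1 + y 3 * coef_f3 \<omega> 3 + y 4 * coef_f3 \<omega> 4)) (unitv 5)))))"
    (is "y = ?z")
proof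
  fix m
  show "y m = ?z m"
  proof (cases "m < 6")
    case True
    then show ?thesis
      by (elim less_6_cases[elim_format] disjE) (simp_all add: lin2_def perp_def unitv_def algebra_simps)
  next
    case False
    then show ?thesis using y by (simp add: V_def lin2_def perp_def unitv_def)
  qed
qed

text \<open>Nondegeneracy of omega makes the (perp 0, perp 1) x (perp 3, perp 4) block invertible:
  otherwise a nonzero combination of perp 0, perp 1 would be omega-orthogonal to everything.\<close>
lemma det_perp_nonzero:
  assumes iso01: "omega_perp \<omega> 0 1 = 0"
    and nd: "\<forall>x\<in>V. (\<forall>y\<in>V. ev2 \<omega> x y = 0) \<longrightarrow> x = (\<lambda>_. 0)"
  shows "det_perp \<omega> \<noteq> 0"
proof
  assume "det_perp \<omega> = 0"
  then obtain a b where ab: "a \<noteq> 0 \<or> b \<noteq> 0" "a * omega_perp \<omega> 0 3 + b * omega_perp \<omega> 1 3 = 0"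
      "a * omega_perp \<omega> 0 4 + b * omega_perp \<omega> 1 4 = 0"
    unfolding det_perp_def by (rule singular_2x2_left_kernel)
  let ?x = "lin2 a (perp \<omega> 0) b (perp \<omega> 1)"
  have iso10: "omega_perp \<omega> 1 0 = 0" using iso01 omega_perp_skew[of 1 0] by simp
  have x_perp: "ev2 \<omega> ?x (perp \<omega> j) = a * omega_perp \<omega> 0 j + b * omega_perp \<omega> 1 j" if "j < 6" for j
    using that by (simp add: ev2_lin2_left ev2_perp)
  have "ev2 \<omega> ?x y = 0" if "y \<in> V" for y
    apply (subst perp_decomposition[OF that])
    apply (simp only: ev2_lin2_right x_perp[of 0] x_perp[of 1] x_perp[of 3] x_perp[of 4])
    using ab(2,3) iso01 iso10 by (simp add: ev2_lin2_left perp_orth_centre omega_perp_diag)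
  moreover have "?x \<in> V" by (simp add: V_def lin2_def perp_def unitv_def)
  ultimately have "?x = (\<lambda>_. 0)" using nd by blast
  then have "?x 0 = 0" "?x 1 = 0" by simp_all
  then show False using ab(1) by (simp add: lin2_def perp_def unitv_def)
qed

lemma adapted_basis_gram:
  assumes iso01: "omega_perp \<omega> 0 1 = 0" and iso34: "omega_perp \<omega> 3 4 = 0"
    and ij: "i < 6" "j < 6"
  shows "ev2 \<omega> (adapted_basis \<omega> i) (adapted_basis \<omega> j) = (det_perp \<omega> / \<omega> [2,5]) * stdform i j"
proof -
  have iso: "omega_perp \<omega> 1 0 = 0" "omega_perp \<omega> 4 3 = 0"
    "omega_perp \<omega> 0 (Suc 0) = 0" "omega_perp \<omega> (Suc 0) 0 = 0"
    using iso01 iso34 omega_perp_skew[of 1 0] omega_perp_skew[of 4 3] by simp_all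
  have sk: "omega_perp \<omega> 3 0 = - omega_perp \<omega> 0 3" "omega_perp \<omega> 4 0 = - omega_perp \<omega> 0 4"
    "omega_perp \<omega> 3 (Suc 0) = - omega_perp \<omega> (Suc 0) 3" "omega_perp \<omega> 4 (Suc 0) = - omega_perp \<omega> (Suc 0) 4"
    by (rule omega_perp_skew)+
  have centre: "ev2 \<omega> (unitv 2) (unitv 2) = 0" "ev2 \<omega> (unitv 5) (unitv 5) = 0"
    "ev2 \<omega> (unitv 2) (unitv 5) = \<omega> [2,5]" "ev2 \<omega> (unitv 5) (unitv 2) = - \<omega> [2,5]"
    by (simp_all add: ev2_unitv form2_diag[OF form] skew[of 2 5])
  from ij show ?thesis
    by (elim less_6_cases[elim_format] disjE)
      (simp_all add: adapted_basis_def ev2_scal_left ev2_scal_right ev2_lin2_left ev2_lin2_right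
        ev2_perp perp_orth_centre centre omega_perp_diag iso iso01 iso34 sk stdform_def,
       simp_all add: det_perp_def field_simps power2_eq_square centre_pairing)
qed

end

lemma adapted_standard_basis:
  assumes form: "is_form 2 \<omega>" and c: "\<omega> [2,5] \<noteq> 0"
    and nd: "\<forall>x\<in>V. (\<forall>y\<in>V. ev2 \<omega> x y = 0) \<longrightarrow> x = (\<lambda>_. 0)"
    and closed: "dform 4 (wedge 2 2 \<omega> \<omega>) = (\<lambda>_. 0)"
  shows "\<exists>b c. standard_basis b \<and> c \<noteq> 0 \<and> (\<forall>i<6. \<forall>j<6. ev2 \<omega> (b i) (b j) = c * stdform i j)"
proof -
  note rel = closed_omega_sq_relations[OF form closed]
  have iso01: "omega_perp \<omega> 0 1 = 0" and iso34: "omega_perp \<omega> 3 4 = 0"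
    using omega_perp_01[OF form c rel(2)] omega_perp_34[OF form c rel(1)] .
  have gram: "\<forall>i<6. \<forall>j<6. ev2 \<omega> (adapted_basis \<omega> i) (adapted_basis \<omega> j)
                = (det_perp \<omega> / \<omega> [2,5]) * stdform i j"
    using adapted_basis_gram[OF form c iso01 iso34] by blast
  have scale: "det_perp \<omega> / \<omega> [2,5] \<noteq> 0"
    using det_perp_nonzero[OF form c iso01 nd] c by simp
  have "standard_basis (adapted_basis \<omega>)"
    unfolding standard_basis_def
    using adapted_basis_V symplectic_gram_independent[OF gram scale] adapted_basis_bracket[of \<omega>, OF c] by blast
  then show ?thesis using gram scale by blast
qed

lemma unitv_centre: "i = 2 \<or> i = 5 \<Longrightarrow> unitv i \<in> centre"
  by (auto simp: centre_def V_def unitv_def lb_def fun_eq_iff)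

theorem lemma4p6:
  fixes \<omega> \<rho> :: form
  assumes "half_flat \<omega> \<rho>"
  shows "(\<exists>x\<in>centre. \<exists>y\<in>centre. ev2 \<omega> x y \<noteq> 0) \<and>
         (\<exists>b c. standard_basis b \<and> c \<noteq> 0 \<and>
            (\<forall>i<6. \<forall>j<6. ev2 \<omega> (b i) (b j) = c * stdform i j))"
proof
  have c: "\<omega> [2,5] \<noteq> 0" by (rule omega_centre_nonzero[OF assms])
  then have "ev2 \<omega> (unitv 2) (unitv 5) \<noteq> 0" by (simp add: ev2_unitv)
  then show "\<exists>x\<in>centre. \<exists>y\<in>centre. ev2 \<omega> x y \<noteq> 0"
    using unitv_centre[of 2] unitv_centre[of 5] by blast
  have "is_form 2 \<omega>" and "\<forall>x\<in>V. (\<forall>y\<in>V. ev2 \<omega> x y = 0) \<longrightarrow> x = (\<lambda>_. 0)"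
    and "dform 4 (wedge 2 2 \<omega> \<omega>) = (\<lambda>_. 0)"
    using assms by (auto simp: half_flat_def SU3_structure_def compatible_normalised_def nondeg2_def)
  then show "\<exists>b c. standard_basis b \<and> c \<noteq> 0 \<and> (\<forall>i<6. \<forall>j<6. ev2 \<omega> (b i) (b j) = c * stdform i j)"
    using adapted_standard_basis c by blast
qed

end
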